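(* Assume $\mu<1$. Then for every integer $r\ge1$, $$\mathbf{P}[M=r]\le\frac{p_r}{1-\mu}.$$ In particular $\mathbf{E}[M]<\infty$.
   Context: Let $p=(p_0,p_1,p_2,\dots)$ be a probability distribution on the nonnegative integers with mean $\mu=\sum_k kp_k\in(0,\infty)$, and let $\tau(p)$ be a Galton–Watson tree with offspring distribution $p$: it starts with a single root at generation $0$, and every vertex independently has $k$ children with probability $p_k$. The out-degree of a vertex is its number of children. $M_n$ denotes the maximal out-degree among the vertices of generation $n$ (with $M_n=0$ if generation $n$ is empty), and $M=\sup_{n\ge0}M_n$ is the global maximal out-degree. *)

theory Defs
  imports "HOL-Probability.Probability"
begin

text \<open>Galton--Watson tree via the Ulam--Harris labelling: every potential vertex
  u :: nat list carries an i.i.d. offspring count omega u with law p; the root is [],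
  and the children of a vertex u in the tree are u @ [i] for i < omega u.\<close>

definition gw_space :: "nat pmf \<Rightarrow> (nat list \<Rightarrow> nat) measure" where
  "gw_space p = PiM UNIV (\<lambda>_::nat list. measure_pmf p)"

inductive_set gw_tree :: "(nat list \<Rightarrow> nat) \<Rightarrow> nat list set" for \<omega> where
  root: "[] \<in> gw_tree \<omega>"
| child: "u \<in> gw_tree \<omega> \<Longrightarrow> i < \<omega> u \<Longrightarrow> u @ [i] \<in> gw_tree \<omega>"

definition gw_gen :: "(nat list \<Rightarrow> nat) \<Rightarrow> nat \<Rightarrow> nat list set" where
  "gw_gen \<omega> n = {u \<in> gw_tree \<omega>. length u = n}"

definition gw_Mn :: "(nat list \<Rightarrow> nat) \<Rightarrow> nat \<Rightarrow> nat" where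
  "gw_Mn \<omega> n = (if gw_gen \<omega> n = {} then 0 else Max (\<omega> ` gw_gen \<omega> n))"

definition gw_M :: "(nat list \<Rightarrow> nat) \<Rightarrow> enat" where
  "gw_M \<omega> = (SUP n. enat (gw_Mn \<omega> n))"

definition offspring_mean :: "nat pmf \<Rightarrow> real" where
  "offspring_mean p = (\<Sum>k. real k * pmf p k)"

end

theory Submission imports Defs begin

(* A word u = [i_0, ..., i_(n-1)] is a vertex iff i_j < omega (take j u) for all j, and these
   conditions concern coordinates other than omega u. Hence u is a vertex of out-degree r with
   probability p_r w(u), where w(u) = prod_j P[X > i_j]. As sum_i P[X > i] = mu, the weights of
   the words of length n sum to mu^n, so the expected number of vertices of out-degree r is
   p_r / (1 - mu). The event M = r forces such a vertex to exist, and M is at most the total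
   out-degree of the tree, whose expectation is mu / (1 - mu). *)

lemma space_gw_space [simp]: "space (gw_space p) = UNIV"
  by (simp add: gw_space_def space_PiM)

lemma emeasure_le_nn_integral_indicator: "emeasure M A \<le> (\<integral>\<^sup>+x. indicator A x \<partial>M)"
  by (cases "A \<in> sets M") (simp_all add: emeasure_notin_sets)

lemma emeasure_gw_space_cylinder:
  assumes "finite J"
  shows "{\<omega>. \<forall>v\<in>J. \<omega> v \<in> A v} \<in> sets (gw_space p)"
    and "emeasure (gw_space p) {\<omega>. \<forall>v\<in>J. \<omega> v \<in> A v} = (\<Prod>v\<in>J. emeasure (measure_pmf p) (A v))"
proof -
  have eq: "{\<omega>. \<forall>v\<in>J. \<omega> v \<in> A v} = prod_emb UNIV (\<lambda>_. measure_pmf p) J (PiE J A)"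
    by (auto simp: prod_emb_def space_PiM PiE_iff)
  show "{\<omega>. \<forall>v\<in>J. \<omega> v \<in> A v} \<in> sets (gw_space p)"
    unfolding eq gw_space_def using assms
    by (intro measurable_prod_emb sets_PiM_I_finite) auto
  show "emeasure (gw_space p) {\<omega>. \<forall>v\<in>J. \<omega> v \<in> A v} = (\<Prod>v\<in>J. emeasure (measure_pmf p) (A v))"
    unfolding eq gw_space_def using assms
    by (intro emeasure_PiM_emb prob_space_measure_pmf) auto
qed

lemma mem_gw_tree_iff: "u \<in> gw_tree \<omega> \<longleftrightarrow> (\<forall>j<length u. u ! j < \<omega> (take j u))"
proof (induction u rule: rev_induct)
  case Nil
  then show ?case by (simp add: gw_tree.root)
next
  case (snoc i v)
  have "v @ [i] \<in> gw_tree \<omega> \<longleftrightarrow> v \<in> gw_tree \<omega> \<and> i < \<omega> v"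
    by (auto elim: gw_tree.cases intro: gw_tree.child)
  also have "\<dots> \<longleftrightarrow> (\<forall>j<length (v @ [i]). (v @ [i]) ! j < \<omega> (take j (v @ [i])))"
    using snoc by (auto simp: nth_append less_Suc_eq)
  finally show ?case .
qed

definition pmf_tail :: "nat pmf \<Rightarrow> nat \<Rightarrow> ennreal" where
  "pmf_tail p i = emeasure (measure_pmf p) {x. i < x}"

text \<open>The probability that u is a vertex of the Galton--Watson tree.\<close>
definition vertex_weight :: "nat pmf \<Rightarrow> nat list \<Rightarrow> ennreal" where
  "vertex_weight p u = (\<Prod>j<length u. pmf_tail p (u ! j))"

lemma vertex_weight_snoc: "vertex_weight p (v @ [i]) = vertex_weight p v * pmf_tail p i"
proof -
  have "vertex_weight p (v @ [i]) = (\<Prod>j<length v. pmf_tail p ((v @ [i]) ! j)) * pmf_tail p i"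
    unfolding vertex_weight_def by (simp add: prod.lessThan_Suc nth_append)
  also have "(\<Prod>j<length v. pmf_tail p ((v @ [i]) ! j)) = vertex_weight p v"
    unfolding vertex_weight_def by (rule prod.cong) (auto simp: nth_append)
  finally show ?thesis .
qed

lemma gw_vertex_event:
  "{\<omega>. u \<in> gw_tree \<omega> \<and> \<omega> u \<in> B} \<in> sets (gw_space p)"
  "emeasure (gw_space p) {\<omega>. u \<in> gw_tree \<omega> \<and> \<omega> u \<in> B}
    = emeasure (measure_pmf p) B * vertex_weight p u"
proof -
  define J where "J = (\<lambda>j. take j u) ` {..<length u}"
  define A where "A = (\<lambda>v. if v = u then B else {x. u ! length v < x})"
  have take_ne: "take j u \<noteq> u" if "j < length u" for j
    using that by (metis length_take less_irrefl min.absorb4)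
  have inj: "inj_on (\<lambda>j. take j u) {..<length u}"
    by (rule inj_onI) (metis lessThan_iff length_take min.absorb4)
  have fin: "finite (insert u J)" and uJ: "u \<notin> J"
    unfolding J_def using take_ne by (auto dest: sym)
  have eq: "{\<omega>. u \<in> gw_tree \<omega> \<and> \<omega> u \<in> B} = {\<omega>. \<forall>v\<in>insert u J. \<omega> v \<in> A v}"
    unfolding mem_gw_tree_iff J_def A_def using take_ne by auto
  show "{\<omega>. u \<in> gw_tree \<omega> \<and> \<omega> u \<in> B} \<in> sets (gw_space p)"
    unfolding eq by (rule emeasure_gw_space_cylinder(1)[OF fin])
  have "emeasure (gw_space p) {\<omega>. u \<in> gw_tree \<omega> \<and> \<omega> u \<in> B}
      = (\<Prod>v\<in>insert u J. emeasure (measure_pmf p) (A v))"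
    unfolding eq by (rule emeasure_gw_space_cylinder(2)[OF fin])
  also have "\<dots> = emeasure (measure_pmf p) B * (\<Prod>v\<in>J. emeasure (measure_pmf p) (A v))"
    using fin uJ by (simp add: A_def)
  also have "(\<Prod>v\<in>J. emeasure (measure_pmf p) (A v)) = vertex_weight p u"
    unfolding J_def prod.reindex[OF inj] vertex_weight_def pmf_tail_def
    using take_ne by (intro prod.cong) (auto simp: A_def)
  finally show "emeasure (gw_space p) {\<omega>. u \<in> gw_tree \<omega> \<and> \<omega> u \<in> B}
      = emeasure (measure_pmf p) B * vertex_weight p u" .
qed

lemma offspring_mean_nonneg:
  assumes "summable (\<lambda>k. real k * pmf p k)"
  shows "0 \<le> offspring_mean p"
  unfolding offspring_mean_def using assms by (intro suminf_nonneg) auto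

lemma nn_integral_offspring_mean:
  assumes "summable (\<lambda>k. real k * pmf p k)"
  shows "(\<integral>\<^sup>+k. of_nat k \<partial>measure_pmf p) = ennreal (offspring_mean p)"
proof -
  have "(\<integral>\<^sup>+k. of_nat k \<partial>measure_pmf p) = (\<integral>\<^sup>+k. ennreal (real k * pmf p k) \<partial>count_space UNIV)"
    unfolding nn_integral_measure_pmf
    by (intro nn_integral_cong) (simp add: ennreal_mult' ennreal_of_nat_eq_real_of_nat mult.commute)
  also have "\<dots> = ennreal (offspring_mean p)"
    unfolding nn_integral_count_space_nat offspring_mean_def
    by (rule suminf_ennreal2) (auto simp: assms)
  finally show ?thesis .
qed

lemma nn_integral_pmf_tail:
  assumes "summable (\<lambda>k. real k * pmf p k)"
  shows "(\<integral>\<^sup>+i. pmf_tail p i \<partial>count_space UNIV) = ennreal (offspring_mean p)"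
proof -
  have "(\<integral>\<^sup>+i. pmf_tail p i \<partial>count_space UNIV)
      = (\<integral>\<^sup>+i. \<integral>\<^sup>+k. ennreal (pmf p k) * indicator {..<k} i \<partial>count_space UNIV \<partial>count_space UNIV)"
    unfolding pmf_tail_def
    by (auto simp: nn_integral_indicator[symmetric] nn_integral_measure_pmf indicator_def
             intro!: nn_integral_cong simp del: nn_integral_indicator)
  also have "\<dots> = (\<integral>\<^sup>+k. \<integral>\<^sup>+i. ennreal (pmf p k) * indicator {..<k} i \<partial>count_space UNIV \<partial>count_space UNIV)"
    by (rule nn_integral_count_space_nn_integral[symmetric]) auto
  also have "\<dots> = (\<integral>\<^sup>+k. of_nat k \<partial>measure_pmf p)"
    by (simp add: nn_integral_cmult nn_integral_measure_pmf mult.commute)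
  finally show ?thesis using nn_integral_offspring_mean[OF assms] by simp
qed

lemma nn_integral_count_space_snoc:
  fixes g :: "nat list \<Rightarrow> ennreal"
  shows "(\<integral>\<^sup>+u. g u \<partial>count_space UNIV)
    = g [] + (\<integral>\<^sup>+v. \<integral>\<^sup>+i. g (v @ [i]) \<partial>count_space UNIV \<partial>count_space UNIV)"
proof -
  have bij: "bij_betw (\<lambda>(v, i). v @ [i]) (UNIV :: (nat list \<times> nat) set) {u. u \<noteq> []}"
    by (rule bij_betw_byWitness[where f'="\<lambda>u. (butlast u, last u)"]) auto
  have "(\<integral>\<^sup>+v. \<integral>\<^sup>+i. g (v @ [i]) \<partial>count_space UNIV \<partial>count_space UNIV)
      = (\<integral>\<^sup>+x. g (case x of (v, i) \<Rightarrow> v @ [i]) \<partial>count_space UNIV \<Otimes>\<^sub>M count_space UNIV)"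
    by (subst sigma_finite_measure.nn_integral_fst[symmetric])
       (simp_all add: sigma_finite_measure_count_space_countable pair_measure_countable)
  also have "\<dots> = (\<integral>\<^sup>+u. g u \<partial>count_space {u. u \<noteq> []})"
    using nn_integral_bij_count_space[OF bij, of g] by (simp add: pair_measure_countable)
  also have "\<dots> = (\<integral>\<^sup>+u. g u * indicator {u. u \<noteq> []} u \<partial>count_space UNIV)"
    by (rule nn_integral_count_space_indicator) simp
  finally have nonempty: "(\<integral>\<^sup>+v. \<integral>\<^sup>+i. g (v @ [i]) \<partial>count_space UNIV \<partial>count_space UNIV)
      = (\<integral>\<^sup>+u. g u * indicator {u. u \<noteq> []} u \<partial>count_space UNIV)" .
  have "(\<integral>\<^sup>+u. g u \<partial>count_space UNIV)
      = (\<integral>\<^sup>+u. g u * indicator {[]} u + g u * indicator {u. u \<noteq> []} u \<partial>count_space UNIV)"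
    by (intro nn_integral_cong) (auto simp: indicator_def)
  also have "\<dots> = g [] + (\<integral>\<^sup>+u. g u * indicator {u. u \<noteq> []} u \<partial>count_space UNIV)"
    by (subst nn_integral_add) (auto simp: nn_integral_indicator_finite)
  finally show ?thesis using nonempty by simp
qed

lemma nn_integral_vertex_weight_length:
  assumes "summable (\<lambda>k. real k * pmf p k)"
  shows "(\<integral>\<^sup>+u. indicator {u. length u = n} u * vertex_weight p u \<partial>count_space UNIV)
    = ennreal (offspring_mean p) ^ n"
proof (induction n)
  case 0
  show ?case
    by (subst nn_integral_count_space_snoc) (simp add: vertex_weight_def)
next
  case (Suc n)
  have "(\<integral>\<^sup>+u. indicator {u. length u = Suc n} u * vertex_weight p u \<partial>count_space UNIV)
      = (\<integral>\<^sup>+v. \<integral>\<^sup>+i. (indicator {u. length u = n} v * vertex_weight p v) * pmf_tail p i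
           \<partial>count_space UNIV \<partial>count_space UNIV)"
    by (subst nn_integral_count_space_snoc)
       (auto simp: vertex_weight_snoc indicator_def mult.assoc intro!: nn_integral_cong)
  also have "\<dots> = ennreal (offspring_mean p) ^ n * ennreal (offspring_mean p)"
    by (simp add: nn_integral_cmult nn_integral_multc nn_integral_pmf_tail[OF assms] Suc)
  finally show ?case by (simp add: mult.commute)
qed

lemma nn_integral_vertex_weight:
  assumes "summable (\<lambda>k. real k * pmf p k)" and "offspring_mean p < 1"
  shows "(\<integral>\<^sup>+u. vertex_weight p u \<partial>count_space UNIV) = ennreal (1 / (1 - offspring_mean p))"
proof -
  let ?\<mu> = "offspring_mean p"
  have "(\<integral>\<^sup>+u. vertex_weight p u \<partial>count_space UNIV)
      = (\<integral>\<^sup>+u. (\<Sum>n. indicator {u. length u = n} u * vertex_weight p u) \<partial>count_space UNIV)"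
  proof (rule nn_integral_cong)
    fix u :: "nat list"
    have "(\<Sum>n. indicator {u. length u = n} u * vertex_weight p u)
        = (\<Sum>n\<in>{length u}. indicator {u. length u = n} u * vertex_weight p u)"
      by (rule suminf_finite) auto
    then show "vertex_weight p u = (\<Sum>n. indicator {u. length u = n} u * vertex_weight p u)"
      by simp
  qed
  also have "\<dots> = (\<Sum>n. ennreal (?\<mu> ^ n))"
    by (subst nn_integral_suminf)
       (simp_all add: nn_integral_vertex_weight_length[OF assms(1)]
        ennreal_power offspring_mean_nonneg[OF assms(1)])
  also have "\<dots> = ennreal (\<Sum>n. ?\<mu> ^ n)"
    using assms offspring_mean_nonneg[OF assms(1)]
    by (intro suminf_ennreal2) (auto simp: summable_geometric)
  also have "(\<Sum>n. ?\<mu> ^ n) = 1 / (1 - ?\<mu>)"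
    using assms offspring_mean_nonneg[OF assms(1)] by (intro suminf_geometric) auto
  finally show ?thesis .
qed

lemma nn_integral_gw_vertex:
  "(\<integral>\<^sup>+\<omega>. indicator (gw_tree \<omega>) u * f (\<omega> u) \<partial>gw_space p)
    = vertex_weight p u * (\<integral>\<^sup>+k. f k \<partial>measure_pmf p)"
proof -
  let ?E = "\<lambda>r. {\<omega>. u \<in> gw_tree \<omega> \<and> \<omega> u \<in> {r}}"
  have split_degree: "indicator (gw_tree \<omega>) u * f (\<omega> u)
      = (\<integral>\<^sup>+r. f r * indicator (?E r) \<omega> \<partial>count_space UNIV)" for \<omega>
  proof -
    have "(\<integral>\<^sup>+r. f r * indicator (?E r) \<omega> \<partial>count_space UNIV)
        = (\<integral>\<^sup>+r. (indicator (gw_tree \<omega>) u * f (\<omega> u)) * indicator {\<omega> u} r \<partial>count_space UNIV)"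
      by (intro nn_integral_cong) (auto simp: indicator_def)
    then show ?thesis
      by (simp add: nn_integral_cmult_indicator)
  qed
  have "(\<integral>\<^sup>+\<omega>. indicator (gw_tree \<omega>) u * f (\<omega> u) \<partial>gw_space p)
      = (\<integral>\<^sup>+r. \<integral>\<^sup>+\<omega>. f r * indicator (?E r) \<omega> \<partial>gw_space p \<partial>count_space UNIV)"
    unfolding split_degree
    by (rule nn_integral_count_space_nn_integral)
       (use gw_vertex_event(1)[where B = "{_}"] in \<open>auto intro!: borel_measurable_times_ennreal\<close>)
  also have "\<dots> = (\<integral>\<^sup>+r. vertex_weight p u * (ennreal (pmf p r) * f r) \<partial>count_space UNIV)"
  proof (rule nn_integral_cong)
    fix r
    show "(\<integral>\<^sup>+\<omega>. f r * indicator (?E r) \<omega> \<partial>gw_space p) = vertex_weight p u * (ennreal (pmf p r) * f r)"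
      using gw_vertex_event[where B = "{r}" and u = u and p = p]
      by (simp add: nn_integral_cmult_indicator emeasure_pmf_single mult_ac del: singleton_iff)
  qed
  also have "\<dots> = vertex_weight p u * (\<integral>\<^sup>+k. f k \<partial>measure_pmf p)"
    by (simp add: nn_integral_cmult nn_integral_measure_pmf)
  finally show ?thesis .
qed

lemma measurable_gw_vertex:
  fixes f :: "nat \<Rightarrow> ennreal"
  shows "(\<lambda>\<omega>. indicator (gw_tree \<omega>) u * f (\<omega> u)) \<in> borel_measurable (gw_space p)"
proof -
  have "(\<lambda>\<omega>. indicator {\<omega>. u \<in> gw_tree \<omega>} \<omega> :: ennreal) \<in> borel_measurable (gw_space p)"
    using gw_vertex_event(1)[where B = UNIV] by (intro borel_measurable_indicator) simp
  moreover have "(\<lambda>\<omega>. \<omega> u) \<in> measurable (gw_space p) (measure_pmf p)"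
    unfolding gw_space_def by (rule measurable_component_singleton) simp
  then have "(\<lambda>\<omega>. f (\<omega> u)) \<in> borel_measurable (gw_space p)"
    by (rule measurable_compose) simp
  ultimately have "(\<lambda>\<omega>. indicator {\<omega>. u \<in> gw_tree \<omega>} \<omega> * f (\<omega> u)) \<in> borel_measurable (gw_space p)"
    by (rule borel_measurable_times_ennreal)
  then show ?thesis
    by (simp add: indicator_def)
qed

lemma nn_integral_gw_tree_sum:
  assumes "summable (\<lambda>k. real k * pmf p k)" and "offspring_mean p < 1"
  shows "(\<integral>\<^sup>+\<omega>. (\<integral>\<^sup>+u. indicator (gw_tree \<omega>) u * f (\<omega> u) \<partial>count_space UNIV) \<partial>gw_space p)
    = (\<integral>\<^sup>+k. f k \<partial>measure_pmf p) * ennreal (1 / (1 - offspring_mean p))"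
proof -
  have "(\<integral>\<^sup>+\<omega>. (\<integral>\<^sup>+u. indicator (gw_tree \<omega>) u * f (\<omega> u) \<partial>count_space UNIV) \<partial>gw_space p)
      = (\<integral>\<^sup>+u. vertex_weight p u * (\<integral>\<^sup>+k. f k \<partial>measure_pmf p) \<partial>count_space UNIV)"
    by (subst nn_integral_count_space_nn_integral)
       (simp_all add: measurable_gw_vertex nn_integral_gw_vertex)
  also have "\<dots> = (\<integral>\<^sup>+k. f k \<partial>measure_pmf p) * ennreal (1 / (1 - offspring_mean p))"
    by (simp add: nn_integral_multc nn_integral_vertex_weight[OF assms] mult.commute)
  finally show ?thesis .
qed

lemma finite_gw_gen: "finite (gw_gen \<omega> n)"
proof (induction n)
  case 0
  have "gw_gen \<omega> 0 \<subseteq> {[]}" by (auto simp: gw_gen_def)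
  then show ?case by (rule finite_subset) simp
next
  case (Suc n)
  have "gw_gen \<omega> (Suc n) \<subseteq> (\<Union>v\<in>gw_gen \<omega> n. (\<lambda>i. v @ [i]) ` {..<\<omega> v})"
  proof
    fix u assume "u \<in> gw_gen \<omega> (Suc n)"
    then have "u \<in> gw_tree \<omega>" and "length u = Suc n" by (auto simp: gw_gen_def)
    then show "u \<in> (\<Union>v\<in>gw_gen \<omega> n. (\<lambda>i. v @ [i]) ` {..<\<omega> v})"
      by (cases rule: gw_tree.cases) (auto simp: gw_gen_def)
  qed
  then show ?case by (rule finite_subset) (use Suc in auto)
qed

lemma gw_Mn_attained:
  assumes "gw_gen \<omega> n \<noteq> {}"
  obtains u where "u \<in> gw_tree \<omega>" and "\<omega> u = gw_Mn \<omega> n"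
proof -
  have "Max (\<omega> ` gw_gen \<omega> n) \<in> \<omega> ` gw_gen \<omega> n"
    using assms finite_gw_gen by (intro Max_in) auto
  then obtain u where "u \<in> gw_gen \<omega> n" and "\<omega> u = gw_Mn \<omega> n"
    using assms unfolding gw_Mn_def by force
  then show ?thesis
    using that by (auto simp: gw_gen_def)
qed

lemma gw_M_attained:
  assumes "gw_M \<omega> = enat r"
  obtains u where "u \<in> gw_tree \<omega>" and "\<omega> u = r"
proof -
  let ?A = "range (\<lambda>n. enat (gw_Mn \<omega> n))"
  have "Sup ?A = enat r" using assms unfolding gw_M_def .
  then have "finite ?A" and "Sup ?A = Max ?A"
    unfolding Sup_enat_def by (auto split: if_splits)
  then have "Sup ?A \<in> ?A" by (metis Max_in empty_not_UNIV image_is_empty)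
  then obtain n where Mn: "gw_Mn \<omega> n = r" using \<open>Sup ?A = enat r\<close> by auto
  show ?thesis
  proof (cases "gw_gen \<omega> n = {}")
    case False
    then show ?thesis using gw_Mn_attained Mn that by metis
  next
    case True
    have root: "gw_gen \<omega> 0 \<noteq> {}" by (auto simp: gw_gen_def intro: gw_tree.root)
    have "enat (gw_Mn \<omega> 0) \<le> gw_M \<omega>" unfolding gw_M_def by (rule SUP_upper) simp
    then have "gw_Mn \<omega> 0 = r" using True Mn assms by (simp add: gw_Mn_def)
    then show ?thesis using gw_Mn_attained[OF root] that by metis
  qed
qed

lemma indicator_gw_M_le:
  "indicator {\<omega>. gw_M \<omega> = enat r} \<omega>
    \<le> (\<integral>\<^sup>+u. indicator (gw_tree \<omega>) u * indicator {r} (\<omega> u) \<partial>count_space UNIV)"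
proof (cases "gw_M \<omega> = enat r")
  case True
  then obtain u where "u \<in> gw_tree \<omega>" and "\<omega> u = r" by (rule gw_M_attained)
  then have "indicator {\<omega>. gw_M \<omega> = enat r} \<omega>
      = indicator (gw_tree \<omega>) u * (indicator {r} (\<omega> u) :: ennreal)"
    using True by simp
  also have "\<dots> \<le> (\<integral>\<^sup>+u. indicator (gw_tree \<omega>) u * indicator {r} (\<omega> u) \<partial>count_space UNIV)"
    by (rule nn_integral_ge_point) simp
  finally show ?thesis .
qed simp

lemma gw_M_le_degree_sum:
  "ennreal_of_enat (gw_M \<omega>)
    \<le> (\<integral>\<^sup>+u. indicator (gw_tree \<omega>) u * of_nat (\<omega> u) \<partial>count_space UNIV)"
  unfolding gw_M_def ennreal_of_enat_Sup
proof (rule SUP_least, clarify)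
  fix n
  show "ennreal_of_enat (enat (gw_Mn \<omega> n))
      \<le> (\<integral>\<^sup>+u. indicator (gw_tree \<omega>) u * of_nat (\<omega> u) \<partial>count_space UNIV)"
  proof (cases "gw_gen \<omega> n = {}")
    case False
    then obtain u where "u \<in> gw_tree \<omega>" and "\<omega> u = gw_Mn \<omega> n" by (rule gw_Mn_attained)
    then have "ennreal_of_enat (enat (gw_Mn \<omega> n)) = indicator (gw_tree \<omega>) u * of_nat (\<omega> u)"
      by simp
    also have "\<dots> \<le> (\<integral>\<^sup>+u. indicator (gw_tree \<omega>) u * of_nat (\<omega> u) \<partial>count_space UNIV)"
      by (rule nn_integral_ge_point) simp
    finally show ?thesis .
  qed (simp add: gw_Mn_def)
qed

theorem mainTheorem7:
  fixes p :: "nat pmf"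
  assumes "summable (\<lambda>k. real k * pmf p k)"
    and "0 < offspring_mean p"
    and "offspring_mean p < 1"
  shows "(\<forall>r::nat. r \<ge> 1 \<longrightarrow>
           measure (gw_space p) {\<omega> \<in> space (gw_space p). gw_M \<omega> = enat r}
             \<le> pmf p r / (1 - offspring_mean p))
         \<and> (\<integral>\<^sup>+ \<omega>. ennreal_of_enat (gw_M \<omega>) \<partial>gw_space p) < \<infinity>"
proof (intro conjI allI impI)
  fix r :: nat
  let ?S = "{\<omega> \<in> space (gw_space p). gw_M \<omega> = enat r}"
  have "emeasure (gw_space p) ?S \<le> (\<integral>\<^sup>+\<omega>. indicator {\<omega>. gw_M \<omega> = enat r} \<omega> \<partial>gw_space p)"
    by (simp add: emeasure_le_nn_integral_indicator)
  also have "\<dots> \<le> (\<integral>\<^sup>+\<omega>. (\<integral>\<^sup>+u. indicator (gw_tree \<omega>) u * indicator {r} (\<omega> u) \<partial>count_space UNIV) \<partial>gw_space p)"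
    by (intro nn_integral_mono indicator_gw_M_le)
  also have "\<dots> = ennreal (pmf p r / (1 - offspring_mean p))"
    using assms by (simp add: nn_integral_gw_tree_sum emeasure_pmf_single ennreal_mult'[symmetric] divide_inverse)
  finally show "measure (gw_space p) ?S \<le> pmf p r / (1 - offspring_mean p)"
    unfolding measure_def using assms by (intro enn2real_leI) auto
next
  have "(\<integral>\<^sup>+ \<omega>. ennreal_of_enat (gw_M \<omega>) \<partial>gw_space p)
      \<le> (\<integral>\<^sup>+\<omega>. (\<integral>\<^sup>+u. indicator (gw_tree \<omega>) u * of_nat (\<omega> u) \<partial>count_space UNIV) \<partial>gw_space p)"
    by (intro nn_integral_mono gw_M_le_degree_sum)
  also have "\<dots> = ennreal (offspring_mean p) * ennreal (1 / (1 - offspring_mean p))"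
    using assms by (simp add: nn_integral_gw_tree_sum nn_integral_offspring_mean)
  also have "\<dots> < \<infinity>" by (simp add: ennreal_mult_less_top)
  finally show "(\<integral>\<^sup>+ \<omega>. ennreal_of_enat (gw_M \<omega>) \<partial>gw_space p) < \<infinity>" .
qed

end
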